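(* Let $C \subset \mathbb{S}^{47}$ be a spherical $11$-design whose set of inner products $I(C)=\{\langle x,y\rangle : x,y\in C,\ x\neq y\}$ satisfies $I(C) \subset [-1,1)\setminus F'$, where $F'=\left(-\tfrac12,-\tfrac13\right)\cup\left(\tfrac13,\tfrac12\right)$. Then $|C| \geq 52\,416\,000$. If equality holds, then $C$ is distance invariant and its distance distribution is \[ A_{-1}=1,\quad A_{1/2}=A_{-1/2}=36\,848,\quad A_{1/3}=A_{-1/3}=1\,678\,887,\quad A_{1/6}=A_{-1/6}=12\,608\,784,\quad A_0=23\,766\,960 \] (with $A_t=0$ for all other $t$).
   Context: A spherical $\tau$-design is a finite set $C\subset\mathbb{S}^{n-1}$ such that $\int_{\mathbb{S}^{n-1}} p\, d\sigma_n = \frac{1}{|C|}\sum_{x\in C} p(x)$ for every polynomial $p$ in $n$ variables of degree at most $\tau$, where $\sigma_n$ is the normalized surface measure. For $x\in C$ and $t\in[-1,1)$, $A_t(x)=|\{y\in C: \langle x,y\rangle = t\}|$; $C$ is distance invariant if $A_t(x)$ does not depend on $x\in C$ for every $t$, and then one writes $A_t$. *)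

theory Defs
  imports "HOL-Analysis.Analysis"
begin

definition monomial_fun :: "('n::finite \<Rightarrow> nat) \<Rightarrow> real^'n \<Rightarrow> real" where
  "monomial_fun \<alpha> x = (\<Prod>i\<in>UNIV. (x $ i) ^ (\<alpha> i))"

definition poly_fun_deg_le :: "nat \<Rightarrow> (real^'n::finite \<Rightarrow> real) \<Rightarrow> bool" where
  "poly_fun_deg_le \<tau> p \<longleftrightarrow>
     (\<exists>S c. finite S \<and> (\<forall>\<alpha>\<in>S. (\<Sum>i\<in>UNIV. \<alpha> i) \<le> \<tau>) \<and>
            p = (\<lambda>x. \<Sum>\<alpha>\<in>S. c \<alpha> * monomial_fun \<alpha> x))"

text \<open>Integral against the normalized surface measure on the unit sphere, realised as
  the push-forward of normalized Lebesgue measure on the unit ball under radial projection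
  (cone-measure definition of the normalized surface measure).\<close>
definition sphere_integral :: "(real^'n::finite \<Rightarrow> real) \<Rightarrow> real" where
  "sphere_integral p =
     (LINT x : ball 0 1 | lborel. p (x /\<^sub>R norm x)) / measure lborel (ball (0::real^'n) 1)"

definition spherical_design :: "nat \<Rightarrow> (real^'n::finite) set \<Rightarrow> bool" where
  "spherical_design \<tau> C \<longleftrightarrow>
     finite C \<and> C \<noteq> {} \<and> C \<subseteq> sphere 0 1 \<and>
     (\<forall>p. poly_fun_deg_le \<tau> p \<longrightarrow> sphere_integral p = (\<Sum>x\<in>C. p x) / real (card C))"

definition inner_products :: "(real^'n::finite) set \<Rightarrow> real set" where
  "inner_products C = {x \<bullet> y | x y. x \<in> C \<and> y \<in> C \<and> x \<noteq> y}"

definition dist_count :: "(real^'n::finite) set \<Rightarrow> real \<Rightarrow> real^'n \<Rightarrow> nat" where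
  "dist_count C t x = card {y \<in> C. x \<bullet> y = t}"

definition distance_invariant :: "(real^'n::finite) set \<Rightarrow> bool" where
  "distance_invariant C \<longleftrightarrow>
     (\<forall>t\<in>{-1..<1}. \<forall>x\<in>C. \<forall>y\<in>C. dist_count C t x = dist_count C t y)"

end

theory Submission
  imports Defs "HOL-Computational_Algebra.Polynomial"
begin

text \<open>As the sphere average is rotation invariant, the sum of \<open>(x \<bullet> y)^k\<close> over \<open>y \<in> C\<close> is the
  same for every unit vector \<open>x\<close>, and differentiating along rotations in a coordinate plane yields
  the recurrence for the moments of a coordinate on the sphere. Hence for a univariate polynomial
  \<open>f\<close> of degree at most 11 and \<open>x \<in> C\<close>, the sum of \<open>f(x \<bullet> y)\<close> over \<open>y \<in> C\<close> is \<open>|C|\<close> times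
  the sphere mean of \<open>f(y_1)\<close>. The polynomial
  \<open>f(t) = (t + 1)(t^2 - 1/4)(t^2 - 1/9)(t^2 - 1/36)^2 t^2\<close> is nonnegative on \<open>[-1,1]\<close> outside
  \<open>F'\<close>, so dropping the terms \<open>y \<noteq> x\<close> gives \<open>f(1) \<le> |C|\<close> times its mean, which is
  \<open>|C| \<ge> 52416000\<close> (Delsarte's linear programming bound). In case of equality every inner product
  is a root of \<open>f\<close>, and the same computation with the Lagrange basis polynomials of these eight
  roots yields the counts \<open>A_t\<close>.\<close>

section \<open>Polynomial functions\<close>

lemma poly_fun_deg_le_sum_monomials:
  fixes m :: "'i \<Rightarrow> ('n::finite \<Rightarrow> nat)"
  assumes "finite I" "\<And>i. i \<in> I \<Longrightarrow> (\<Sum>j\<in>UNIV. m i j) \<le> \<tau>"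
  shows "poly_fun_deg_le \<tau> (\<lambda>x. \<Sum>i\<in>I. c i * monomial_fun (m i) x)"
proof -
  define c' where "c' \<alpha> = (\<Sum>i\<in>{i\<in>I. m i = \<alpha>}. c i)" for \<alpha>
  have "(\<Sum>i\<in>I. c i * monomial_fun (m i) x) = (\<Sum>\<alpha>\<in>m ` I. c' \<alpha> * monomial_fun \<alpha> x)" for x
  proof -
    have "(\<Sum>i\<in>I. c i * monomial_fun (m i) x)
        = (\<Sum>\<alpha>\<in>m ` I. \<Sum>i\<in>{i\<in>I. m i = \<alpha>}. c i * monomial_fun (m i) x)"
      using sum.image_gen[OF assms(1), of "\<lambda>i. c i * monomial_fun (m i) x" m] by simp
    also have "\<dots> = (\<Sum>\<alpha>\<in>m ` I. c' \<alpha> * monomial_fun \<alpha> x)"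
      by (auto simp: c'_def sum_distrib_right intro!: sum.cong)
    finally show ?thesis .
  qed
  then show ?thesis
    unfolding poly_fun_deg_le_def using assms by (intro exI[of _ "m ` I"] exI[of _ c']) auto
qed

lemma poly_fun_deg_le_mono: "poly_fun_deg_le a p \<Longrightarrow> a \<le> b \<Longrightarrow> poly_fun_deg_le b p"
  unfolding poly_fun_deg_le_def by (metis (no_types, lifting) order_trans)

lemma poly_fun_deg_le_const: "poly_fun_deg_le \<tau> (\<lambda>x. a)"
  using poly_fun_deg_le_sum_monomials[of "{()}" "\<lambda>_. \<lambda>_. 0" \<tau> "\<lambda>_. a"]
  by (simp add: monomial_fun_def)

lemma poly_fun_deg_le_component: "poly_fun_deg_le 1 (\<lambda>x::real^'n::finite. x $ k)"
proof -
  have "monomial_fun (\<lambda>j. if j = k then 1 else 0) x = x $ k" for x :: "real^'n"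
    by (simp add: monomial_fun_def if_distrib[of "power _"] prod.If_cases)
  then show ?thesis
    using poly_fun_deg_le_sum_monomials[of "{()}" "\<lambda>_ j. if j = k then 1 else 0" 1 "\<lambda>_. 1"]
    by simp
qed

lemma poly_fun_deg_le_add:
  assumes "poly_fun_deg_le \<tau> p" "poly_fun_deg_le \<tau> q"
  shows "poly_fun_deg_le \<tau> (\<lambda>x. p x + q x)"
proof -
  obtain S c where S: "finite S" "\<forall>\<alpha>\<in>S. (\<Sum>i\<in>UNIV. \<alpha> i) \<le> \<tau>"
    "p = (\<lambda>x. \<Sum>\<alpha>\<in>S. c \<alpha> * monomial_fun \<alpha> x)"
    using assms(1) unfolding poly_fun_deg_le_def by blast
  obtain T d where T: "finite T" "\<forall>\<alpha>\<in>T. (\<Sum>i\<in>UNIV. \<alpha> i) \<le> \<tau>"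
    "q = (\<lambda>x. \<Sum>\<alpha>\<in>T. d \<alpha> * monomial_fun \<alpha> x)"
    using assms(2) unfolding poly_fun_deg_le_def by blast
  have "poly_fun_deg_le \<tau> (\<lambda>x. \<Sum>i\<in>S <+> T. case_sum c d i * monomial_fun (case_sum id id i) x)"
    using S T by (intro poly_fun_deg_le_sum_monomials) auto
  moreover have "(\<Sum>i\<in>S <+> T. case_sum c d i * monomial_fun (case_sum id id i) x) = p x + q x" for x
    using S T by (simp add: sum.Plus)
  ultimately show ?thesis by simp
qed

lemma monomial_fun_add: "monomial_fun (\<lambda>j. \<alpha> j + \<beta> j) x = monomial_fun \<alpha> x * monomial_fun \<beta> x"
  by (simp add: monomial_fun_def power_add prod.distrib)

lemma poly_fun_deg_le_mult:
  fixes p q :: "real^'n::finite \<Rightarrow> real"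
  assumes "poly_fun_deg_le a p" "poly_fun_deg_le b q"
  shows "poly_fun_deg_le (a + b) (\<lambda>x. p x * q x)"
proof -
  obtain S c where S: "finite S" "\<forall>\<alpha>\<in>S. (\<Sum>i\<in>UNIV. \<alpha> i) \<le> a"
    "p = (\<lambda>x. \<Sum>\<alpha>\<in>S. c \<alpha> * monomial_fun \<alpha> x)"
    using assms(1) unfolding poly_fun_deg_le_def by blast
  obtain T d where T: "finite T" "\<forall>\<alpha>\<in>T. (\<Sum>i\<in>UNIV. \<alpha> i) \<le> b"
    "q = (\<lambda>x. \<Sum>\<alpha>\<in>T. d \<alpha> * monomial_fun \<alpha> x)"
    using assms(2) unfolding poly_fun_deg_le_def by blast
  define e where "e = (\<lambda>(\<alpha>, \<beta>). c \<alpha> * d \<beta>)"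
  define m where "m = (\<lambda>(\<alpha>::'n \<Rightarrow> nat, \<beta>::'n \<Rightarrow> nat). \<lambda>j. \<alpha> j + \<beta> j)"
  have "poly_fun_deg_le (a + b) (\<lambda>x. \<Sum>i\<in>S \<times> T. e i * monomial_fun (m i) x)"
    using S T by (intro poly_fun_deg_le_sum_monomials) (auto simp: m_def sum.distrib add_mono)
  moreover have "(\<Sum>i\<in>S \<times> T. e i * monomial_fun (m i) x) = p x * q x" for x
    using S T by (simp add: sum_product sum.cartesian_product e_def m_def monomial_fun_add
        mult_ac split_def)
  ultimately show ?thesis by simp
qed

lemma poly_fun_deg_le_power:
  assumes "poly_fun_deg_le a p"
  shows "poly_fun_deg_le (k * a) (\<lambda>x. p x ^ k)"
proof (induction k)
  case 0
  then show ?case using poly_fun_deg_le_const by simp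
next
  case (Suc k)
  then show ?case using poly_fun_deg_le_mult[OF assms] by simp
qed

lemma poly_fun_deg_le_sum:
  assumes "finite A" "\<And>i. i \<in> A \<Longrightarrow> poly_fun_deg_le \<tau> (f i)"
  shows "poly_fun_deg_le \<tau> (\<lambda>x. \<Sum>i\<in>A. f i x)"
  using assms
proof (induction A rule: finite_induct)
  case empty
  then show ?case using poly_fun_deg_le_const by simp
next
  case (insert a A)
  then show ?case using poly_fun_deg_le_add[of \<tau> "f a"] by simp
qed

lemma poly_fun_deg_le_inner_power: "poly_fun_deg_le k (\<lambda>y::real^'n::finite. (u \<bullet> y) ^ k)"
proof -
  have "poly_fun_deg_le (0 + 1) (\<lambda>y::real^'n. u $ i * y $ i)" for i
    by (rule poly_fun_deg_le_mult[OF poly_fun_deg_le_const poly_fun_deg_le_component])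
  then have "poly_fun_deg_le 1 (\<lambda>y::real^'n. u \<bullet> y)"
    unfolding inner_vec_def by (intro poly_fun_deg_le_sum) auto
  then show ?thesis
    using poly_fun_deg_le_power by fastforce
qed

section \<open>Rotation invariance of the sphere integral\<close>

lemma borel_measurable_linear: "linear f \<Longrightarrow> f \<in> borel_measurable borel"
  for f :: "'a::euclidean_space \<Rightarrow> 'b::euclidean_space"
  by (simp add: borel_measurable_continuous_onI linear_continuous_on linear_linear)

lemma distr_lborel_orthogonal_transformation_wellorder:
  fixes Q :: "real^'n::{finite,wellorder} \<Rightarrow> real^'n::_"
  assumes Q: "orthogonal_transformation Q"
  shows "distr lborel borel Q = lborel"
proof (rule lborel_eqI[symmetric])
  have lin: "linear Q" and bij: "bij Q" and Q': "orthogonal_transformation (inv Q)"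
    using Q orthogonal_transformation_linear orthogonal_transformation_bij
      orthogonal_transformation_inv by blast+
  have meas: "Q \<in> borel_measurable borel"
    using lin borel_measurable_linear by blast
  fix l u :: "(real, 'n) vec"
  assume "\<And>b. b \<in> Basis \<Longrightarrow> l \<bullet> b \<le> u \<bullet> b"
  moreover have "emeasure lborel (inv Q ` box l u) = emeasure lborel (box l u)"
  proof -
    have "inv Q ` box l u \<in> sets borel"
      using bij meas by (metis bij_vimage_eq_inv_image borel_open measurable_sets_borel open_box)
    moreover have "bounded (inv Q ` box l u)"
      using Q' by (simp add: bounded_linear_image orthogonal_transformation_linear linear_linear)
    ultimately have "measure lborel (inv Q ` box l u) = measure lborel (box l u)"
      using measure_orthogonal_image[OF Q', of "box l u"] by simp
    with \<open>bounded (inv Q ` box l u)\<close> show ?thesis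
      using emeasure_bounded_finite[OF bounded_box, of l u]
        emeasure_bounded_finite[OF \<open>bounded (inv Q ` box l u)\<close>]
      by (simp add: emeasure_eq_ennreal_measure less_top[symmetric])
  qed
  ultimately show "emeasure (distr lborel borel Q) (box l u) = (\<Prod>b\<in>Basis. (u - l) \<bullet> b)"
    using bij meas by (simp add: emeasure_distr bij_vimage_eq_inv_image)
qed simp

lemma prod_Basis_vec: "(\<Prod>b\<in>(Basis::(real^'n::finite) set). f b) = (\<Prod>i\<in>UNIV. f (axis i 1))"
  by (simp add: Basis_vec_def axis_eq_axis prod.UNION_disjoint)

definition vec_reindex :: "('m::finite \<Rightarrow> 'n::finite) \<Rightarrow> 'a^'n \<Rightarrow> 'a^'m" where
  "vec_reindex \<sigma> x = (\<chi> j. x $ \<sigma> j)"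

lemma linear_vec_reindex: "linear (vec_reindex \<sigma> :: real^'n::finite \<Rightarrow> real^'m::finite)"
  by (rule linearI) (simp_all add: vec_reindex_def vec_eq_iff)

lemma inner_vec_reindex:
  assumes "bij \<sigma>"
  shows "vec_reindex \<sigma> x \<bullet> vec_reindex \<sigma> y = (x \<bullet> (y :: real^'n::finite))"
  using sum.reindex_bij_betw[OF assms, of "\<lambda>i. x $ i * y $ i"]
  by (simp add: vec_reindex_def inner_vec_def)

lemma vec_reindex_inv:
  assumes "bij \<sigma>"
  shows "vec_reindex (inv \<sigma>) (vec_reindex \<sigma> x) = x"
  using assms by (simp add: vec_reindex_def vec_eq_iff bij_is_surj surj_f_inv_f)

lemma distr_lborel_vec_reindex:
  fixes \<sigma> :: "'m::finite \<Rightarrow> 'n::finite"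
  assumes "bij \<sigma>"
  shows "distr lborel borel (vec_reindex \<sigma>) = (lborel :: (real^'m) measure)"
proof (rule lborel_eqI[symmetric])
  have [measurable]: "vec_reindex \<sigma> \<in> borel_measurable (borel :: (real^'n) measure)"
    using linear_vec_reindex borel_measurable_linear by blast
  fix l u :: "real^'m"
  assume le_Basis: "\<And>b. b \<in> Basis \<Longrightarrow> l \<bullet> b \<le> u \<bullet> b"
  have le: "l $ j \<le> u $ j" for j
    using le_Basis[of "axis j 1"] by (auto simp: Basis_vec_def cart_eq_inner_axis)
  have all_reindex: "(\<forall>j. P j (\<sigma> j)) \<longleftrightarrow> (\<forall>i. P (inv \<sigma> i) i)" for P
    using assms by (metis bij_inv_eq_iff)
  have "vec_reindex \<sigma> -` box l u = box (vec_reindex (inv \<sigma>) l) (vec_reindex (inv \<sigma>) u)"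
    using all_reindex[of "\<lambda>j i. l $ j < x $ i \<and> x $ i < u $ j" for x]
    by (auto simp: mem_box_cart vec_reindex_def)
  then have "emeasure (distr lborel borel (vec_reindex \<sigma>)) (box l u)
      = emeasure lborel (box (vec_reindex (inv \<sigma>) l) (vec_reindex (inv \<sigma>) u))"
    by (simp add: emeasure_distr)
  also have "\<dots> = (\<Prod>b\<in>Basis. (vec_reindex (inv \<sigma>) u - vec_reindex (inv \<sigma>) l) \<bullet> b)"
    using le by (intro emeasure_lborel_box) (auto simp: Basis_vec_def inner_axis vec_reindex_def)
  also have "\<dots> = (\<Prod>i\<in>UNIV. u $ inv \<sigma> i - l $ inv \<sigma> i)"
    by (simp add: prod_Basis_vec cart_eq_inner_axis[symmetric] vec_reindex_def)
  also have "\<dots> = (\<Prod>j\<in>UNIV. u $ j - l $ j)"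
    using prod.reindex_bij_betw[OF bij_betw_inv_into[OF assms], of "\<lambda>j. u $ j - l $ j"] by simp
  also have "\<dots> = (\<Prod>b\<in>Basis. (u - l) \<bullet> b)"
    by (simp add: prod_Basis_vec cart_eq_inner_axis[symmetric])
  finally show "emeasure (distr lborel borel (vec_reindex \<sigma>)) (box l u) = (\<Prod>b\<in>Basis. (u - l) \<bullet> b)" .
qed simp

text \<open>\<open>measure_orthogonal_image\<close> is only available for well-ordered index types; the
  hypothesis on \<open>'m\<close> provides one to reindex through (a numeral type of the right size will do).\<close>

lemma distr_lborel_orthogonal_transformation:
  fixes Q :: "real^'n::finite \<Rightarrow> real^'n"
  assumes reindex: "CARD('m::{finite,wellorder}) = CARD('n)"
    and Q: "orthogonal_transformation Q"
  shows "distr lborel borel Q = lborel"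
proof -
  obtain \<sigma> :: "'m \<Rightarrow> 'n" where \<sigma>: "bij \<sigma>"
    using reindex finite_same_card_bij[of "UNIV :: 'm set" "UNIV :: 'n set"] by auto
  then have \<sigma>': "bij (inv \<sigma>)"
    by (simp add: bij_imp_bij_inv)
  define \<Phi> :: "real^'n \<Rightarrow> (real, 'm) vec" where "\<Phi> = vec_reindex \<sigma>"
  define \<Psi> :: "(real, 'm) vec \<Rightarrow> real^'n" where "\<Psi> = vec_reindex (inv \<sigma>)"
  define Q' where "Q' = \<Phi> \<circ> Q \<circ> \<Psi>"
  have lin: "linear \<Phi>" "linear \<Psi>" "linear Q" "linear Q'"
    using Q orthogonal_transformation_linear
    by (auto intro!: linear_compose simp: \<Phi>_def \<Psi>_def Q'_def linear_vec_reindex)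
  then have [measurable]: "\<Psi> \<in> borel_measurable borel" "Q \<in> borel_measurable borel"
    "Q' \<in> borel_measurable borel"
    by (auto intro: borel_measurable_linear)
  have \<Psi>\<Phi>: "\<Psi> (\<Phi> x) = x" for x
    using \<sigma> by (simp add: \<Phi>_def \<Psi>_def vec_reindex_inv)
  have "orthogonal_transformation Q'"
    unfolding orthogonal_transformation_def
  proof (intro conjI allI)
    show "linear Q'"
      by (fact lin)
    show "Q' v \<bullet> Q' w = v \<bullet> w" for v w
      using Q \<sigma> \<sigma>' by (simp add: Q'_def \<Phi>_def \<Psi>_def inner_vec_reindex orthogonal_transformation_def)
  qed
  then have lborel_Q': "distr lborel borel Q' = lborel"
    by (rule distr_lborel_orthogonal_transformation_wellorder)
  have lborel_\<Psi>: "distr lborel borel \<Psi> = lborel"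
    unfolding \<Psi>_def using \<sigma>' by (rule distr_lborel_vec_reindex)
  have "distr lborel borel Q = distr (distr lborel borel \<Psi>) borel Q"
    by (simp add: lborel_\<Psi>)
  also have "\<dots> = distr lborel borel (\<Psi> \<circ> Q')"
    by (simp add: distr_distr comp_def Q'_def \<Psi>\<Phi>)
  also have "\<dots> = distr (distr lborel borel Q') borel \<Psi>"
    by (simp add: distr_distr)
  finally show ?thesis
    by (simp add: lborel_Q' lborel_\<Psi>)
qed

lemma sphere_integral_orthogonal_transformation:
  fixes Q :: "real^'n::finite \<Rightarrow> real^'n"
  assumes reindex: "CARD('m::{finite,wellorder}) = CARD('n)"
    and Q: "orthogonal_transformation Q" and p: "continuous_on UNIV p"
  shows "sphere_integral (\<lambda>x. p (Q x)) = sphere_integral p"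
proof -
  define g where "g z = indicator (ball (0::real^'n) 1) z *\<^sub>R p (z /\<^sub>R norm z)" for z
  have [measurable]: "p \<in> borel_measurable borel" "Q \<in> borel_measurable borel"
    using p Q borel_measurable_continuous_onI borel_measurable_linear orthogonal_transformation_linear
    by blast+
  have "(\<lambda>z. p (z /\<^sub>R norm z)) \<in> borel_measurable borel"
    using measurable_compose[of "\<lambda>z. z /\<^sub>R norm z" borel borel p] by simp
  then have [measurable]: "g \<in> borel_measurable borel"
    unfolding g_def by (intro borel_measurable_scaleR borel_measurable_indicator) auto
  have "g (Q x) = indicator (ball 0 1) x *\<^sub>R p (Q (x /\<^sub>R norm x))" for x
    using Q by (simp add: g_def orthogonal_transformation_norm orthogonal_transformation_scaleR
        indicator_def)
  then have "(LINT x : ball 0 1 | lborel. p (Q (x /\<^sub>R norm x))) = integral\<^sup>L lborel (\<lambda>x. g (Q x))"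
    by (simp add: set_lebesgue_integral_def)
  also have "\<dots> = integral\<^sup>L (distr lborel borel Q) g"
    by (rule integral_distr[symmetric]) simp_all
  also have "\<dots> = (LINT x : ball 0 1 | lborel. p (x /\<^sub>R norm x))"
    by (simp add: distr_lborel_orthogonal_transformation[OF reindex Q] set_lebesgue_integral_def
        g_def[abs_def])
  finally show ?thesis
    by (simp add: sphere_integral_def)
qed

section \<open>Moments of spherical designs\<close>

lemma rotated_power_sum_const_imp:
  fixes p q :: "'a \<Rightarrow> real"
  assumes const: "\<And>\<theta>. (\<Sum>y\<in>A. (cos \<theta> * p y + sin \<theta> * q y) ^ (k + 2)) = c"
  shows "(real k + 1) * (\<Sum>y\<in>A. p y ^ k * q y ^ 2) = (\<Sum>y\<in>A. p y ^ (k + 2))"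
proof -
  define g' where "g' \<theta> = (\<Sum>y\<in>A. (real k + 2) * (cos \<theta> * p y + sin \<theta> * q y) ^ (k + 1)
      * (cos \<theta> * q y - sin \<theta> * p y))" for \<theta>
  have "((\<lambda>\<theta>. \<Sum>y\<in>A. (cos \<theta> * p y + sin \<theta> * q y) ^ (k + 2)) has_real_derivative g' \<theta>) (at \<theta>)"
    for \<theta>
    unfolding g'_def
    by (rule derivative_eq_intros refl | simp add: algebra_simps)+
  then have "((\<lambda>_. c) has_real_derivative g' \<theta>) (at \<theta>)" for \<theta>
    by (simp only: const)
  then have "g' = (\<lambda>_. 0)"
    using DERIV_unique[OF _ DERIV_const] by blast
  moreover have "(g' has_real_derivative
      (\<Sum>y\<in>A. (real k + 2) * ((real k + 1) * p y ^ k * q y ^ 2 - p y ^ (k + 2)))) (at 0)"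
    unfolding g'_def
    by (rule derivative_eq_intros refl)+ (simp add: algebra_simps power2_eq_square)
  ultimately have "(\<Sum>y\<in>A. (real k + 2) * ((real k + 1) * p y ^ k * q y ^ 2 - p y ^ (k + 2))) = 0"
    using DERIV_unique[OF _ DERIV_const] by simp
  moreover have "(\<Sum>y\<in>A. (real k + 2) * ((real k + 1) * p y ^ k * q y ^ 2 - p y ^ (k + 2)))
      = (real k + 2) * ((real k + 1) * (\<Sum>y\<in>A. p y ^ k * q y ^ 2) - (\<Sum>y\<in>A. p y ^ (k + 2)))"
    by (simp add: sum_subtractf mult.assoc flip: sum_distrib_left)
  ultimately show ?thesis
    by simp
qed

lemma spherical_design_unit:
  assumes "spherical_design \<tau> C" "x \<in> C"
  shows "norm x = 1" "x \<bullet> x = 1"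
  using assms by (auto simp: spherical_design_def norm_eq_1)

lemma spherical_design_sum_power_inner_eq:
  fixes C :: "(real^'n::finite) set"
  assumes reindex: "CARD('m::{finite,wellorder}) = CARD('n)"
    and design: "spherical_design \<tau> C" and uv: "norm u = norm v" and k: "k \<le> \<tau>"
  shows "(\<Sum>y\<in>C. (u \<bullet> y) ^ k) = (\<Sum>y\<in>C. (v \<bullet> y) ^ k)"
proof -
  obtain R where R: "orthogonal_transformation R" "R u = v"
    using orthogonal_transformation_exists[OF uv] by blast
  have "sphere_integral (\<lambda>y. (u \<bullet> inv R y) ^ k) = sphere_integral (\<lambda>y. (u \<bullet> y) ^ k)"
    using R(1) by (intro sphere_integral_orthogonal_transformation[OF reindex]
        orthogonal_transformation_inv continuous_intros)
  moreover have "u \<bullet> inv R y = v \<bullet> y" for y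
  proof -
    have "u \<bullet> inv R y = R u \<bullet> R (inv R y)"
      using R(1) unfolding orthogonal_transformation_def by simp
    also have "\<dots> = v \<bullet> y"
      using R orthogonal_transformation_surj surj_f_inv_f by metis
    finally show ?thesis .
  qed
  moreover have "sphere_integral (\<lambda>y. (w \<bullet> y) ^ k) = (\<Sum>y\<in>C. (w \<bullet> y) ^ k) / card C" for w
    using design poly_fun_deg_le_mono[OF poly_fun_deg_le_inner_power k]
    unfolding spherical_design_def by blast
  moreover have "card C \<noteq> 0"
    using design by (simp add: spherical_design_def)
  ultimately show ?thesis
    by simp
qed

lemma spherical_design_component_moment_rec:
  fixes C :: "(real^'n::finite) set"
  assumes reindex: "CARD('m::{finite,wellorder}) = CARD('n)"
    and design: "spherical_design \<tau> C" and k: "k + 2 \<le> \<tau>"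
  shows "(\<Sum>y\<in>C. (y $ a) ^ (k + 2)) * (real k + CARD('n))
    = (\<Sum>y\<in>C. (y $ a) ^ k) * (real k + 1)"
proof -
  define T where "T j = (\<Sum>y\<in>C. (y $ a) ^ j)" for j
  have mixed: "(real k + 1) * (\<Sum>y\<in>C. (y $ a) ^ k * (y $ b) ^ 2) = T (k + 2)" if "b \<noteq> a" for b
    unfolding T_def
  proof (rule rotated_power_sum_const_imp)
    fix \<theta>
    define u where "u = cos \<theta> *\<^sub>R axis a 1 + sin \<theta> *\<^sub>R axis b (1::real)"
    have u: "u \<bullet> y = cos \<theta> * y $ a + sin \<theta> * y $ b" for y :: "real^'n"
      by (simp add: u_def inner_add_left inner_axis')
    have "norm u = 1"
      using u[of u] \<open>b \<noteq> a\<close> by (simp add: norm_eq_1 u_def axis_def power2_eq_square[symmetric])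
    then have "norm u = norm (axis a (1::real))"
      by simp
    from spherical_design_sum_power_inner_eq[OF reindex design this k]
    show "(\<Sum>y\<in>C. (cos \<theta> * y $ a + sin \<theta> * y $ b) ^ (k + 2)) = (\<Sum>y\<in>C. (y $ a) ^ (k + 2))"
      by (simp add: u inner_axis')
  qed
  have "T k = (\<Sum>y\<in>C. (y $ a) ^ k * (\<Sum>b\<in>UNIV. (y $ b) ^ 2))"
    using spherical_design_unit(2)[OF design]
    by (simp add: T_def inner_vec_def power2_eq_square)
  also have "\<dots> = (\<Sum>b\<in>UNIV. \<Sum>y\<in>C. (y $ a) ^ k * (y $ b) ^ 2)"
    by (simp add: sum_distrib_left sum.swap[of _ UNIV])
  also have "\<dots> = (\<Sum>y\<in>C. (y $ a) ^ k * (y $ a) ^ 2)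
      + (\<Sum>b\<in>UNIV - {a}. \<Sum>y\<in>C. (y $ a) ^ k * (y $ b) ^ 2)"
    by (simp add: sum.remove)
  also have "\<dots> = T (k + 2) + (\<Sum>b\<in>UNIV - {a}. T (k + 2) / (real k + 1))"
  proof -
    have "(\<Sum>y\<in>C. (y $ a) ^ k * (y $ a) ^ 2) = T (k + 2)"
      by (simp add: T_def power_add power2_eq_square mult_ac)
    moreover have "(\<Sum>b\<in>UNIV - {a}. \<Sum>y\<in>C. (y $ a) ^ k * (y $ b) ^ 2)
        = (\<Sum>b\<in>UNIV - {a}. T (k + 2) / (real k + 1))"
      by (rule sum.cong) (use mixed in \<open>auto simp: field_simps\<close>)
    ultimately show ?thesis
      by simp
  qed
  also have "\<dots> = T (k + 2) + (real CARD('n) - 1) * T (k + 2) / (real k + 1)"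
    by (simp add: card_Diff_singleton of_nat_diff)
  finally have "T k * (real k + 1) = T (k + 2) * (real k + CARD('n))"
    by (simp add: field_simps)
  then show ?thesis
    by (simp add: T_def)
qed

fun sphere_moment :: "nat \<Rightarrow> nat \<Rightarrow> real" where
  "sphere_moment n 0 = 1"
| "sphere_moment n (Suc 0) = 0"
| "sphere_moment n (Suc (Suc k)) = sphere_moment n k * (k + 1) / (k + n)"

lemma spherical_design_sum_power_component:
  fixes C :: "(real^'n::finite) set"
  assumes reindex: "CARD('m::{finite,wellorder}) = CARD('n)"
    and design: "spherical_design \<tau> C"
  shows "k \<le> \<tau> \<Longrightarrow> (\<Sum>y\<in>C. (y $ a) ^ k) = card C * sphere_moment CARD('n) k"
proof (induction k rule: nat_induct2)
  case 0
  then show ?case by simp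
next
  case 1
  then have "(\<Sum>y\<in>C. y $ a) = - (\<Sum>y\<in>C. y $ a)"
    using spherical_design_sum_power_inner_eq[OF reindex design, of "axis a 1" "- axis a 1" 1]
    by (simp add: inner_axis' sum_negf)
  then show ?case by simp
next
  case (step k)
  have "0 < real CARD('n)"
    by (simp add: finite_UNIV_card_ge_0)
  then have "0 < real k + CARD('n)"
    by linarith
  with step show ?case
    using spherical_design_component_moment_rec[OF reindex design, of k a]
    by (simp add: field_simps)
qed

lemma spherical_design_sum_power_inner:
  fixes C :: "(real^'n::finite) set"
  assumes reindex: "CARD('m::{finite,wellorder}) = CARD('n)"
    and design: "spherical_design \<tau> C" and "norm u = 1" and "k \<le> \<tau>"
  shows "(\<Sum>y\<in>C. (u \<bullet> y) ^ k) = card C * sphere_moment CARD('n) k"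
proof -
  fix a :: 'n
  have "norm u = norm (axis a (1::real))"
    using assms(3) by simp
  with spherical_design_sum_power_inner_eq[OF reindex design this \<open>k \<le> \<tau>\<close>]
    spherical_design_sum_power_component[OF reindex design \<open>k \<le> \<tau>\<close>]
  show ?thesis
    by (simp add: inner_axis')
qed

definition sphere_poly_mean :: "nat \<Rightarrow> real poly \<Rightarrow> real" where
  "sphere_poly_mean n p = (\<Sum>i\<le>degree p. coeff p i * sphere_moment n i)"

lemma spherical_design_sum_poly_inner:
  fixes C :: "(real^'n::finite) set"
  assumes reindex: "CARD('m::{finite,wellorder}) = CARD('n)"
    and design: "spherical_design \<tau> C" and "norm u = 1" and "degree p \<le> \<tau>"
  shows "(\<Sum>y\<in>C. poly p (u \<bullet> y)) = card C * sphere_poly_mean CARD('n) p"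
proof -
  have "(\<Sum>y\<in>C. poly p (u \<bullet> y)) = (\<Sum>i\<le>degree p. coeff p i * (\<Sum>y\<in>C. (u \<bullet> y) ^ i))"
    by (simp add: poly_altdef sum_distrib_left sum.swap[of _ C])
  also have "\<dots> = (\<Sum>i\<le>degree p. coeff p i * (card C * sphere_moment CARD('n) i))"
    using assms by (intro sum.cong refl) (simp add: spherical_design_sum_power_inner)
  finally show ?thesis
    by (simp add: sphere_poly_mean_def sum_distrib_left mult_ac)
qed

lemma spherical_design_sum_poly_inner_others:
  fixes C :: "(real^'n::finite) set"
  assumes reindex: "CARD('m::{finite,wellorder}) = CARD('n)"
    and design: "spherical_design \<tau> C" and x: "x \<in> C" and "degree p \<le> \<tau>"
  shows "(\<Sum>y\<in>C - {x}. poly p (x \<bullet> y)) = card C * sphere_poly_mean CARD('n) p - poly p 1"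
proof -
  have "finite C"
    using design by (simp add: spherical_design_def)
  then have "(\<Sum>y\<in>C. poly p (x \<bullet> y)) = poly p 1 + (\<Sum>y\<in>C - {x}. poly p (x \<bullet> y))"
    using x spherical_design_unit(2)[OF design x] by (simp add: sum.remove)
  with spherical_design_sum_poly_inner[OF reindex design _ \<open>degree p \<le> \<tau>\<close>, of x]
  show ?thesis
    using spherical_design_unit(1)[OF design x] by simp
qed

lemma spherical_design_poly_bound:
  fixes C :: "(real^'n::finite) set"
  assumes reindex: "CARD('m::{finite,wellorder}) = CARD('n)"
    and design: "spherical_design \<tau> C" and "degree p \<le> \<tau>"
    and nonneg: "\<forall>t\<in>inner_products C. 0 \<le> poly p t"
  shows "poly p 1 \<le> card C * sphere_poly_mean CARD('n) p"
proof -
  obtain x where x: "x \<in> C"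
    using design by (auto simp: spherical_design_def)
  have "0 \<le> (\<Sum>y\<in>C - {x}. poly p (x \<bullet> y))"
    using nonneg x by (intro sum_nonneg) (auto simp: inner_products_def)
  with spherical_design_sum_poly_inner_others[OF reindex design x \<open>degree p \<le> \<tau>\<close>]
  show ?thesis
    by simp
qed

lemma spherical_design_poly_bound_eq:
  fixes C :: "(real^'n::finite) set"
  assumes reindex: "CARD('m::{finite,wellorder}) = CARD('n)"
    and design: "spherical_design \<tau> C" and "degree p \<le> \<tau>"
    and nonneg: "\<forall>t\<in>inner_products C. 0 \<le> poly p t"
    and eq: "poly p 1 = card C * sphere_poly_mean CARD('n) p"
  shows "\<forall>t\<in>inner_products C. poly p t = 0"
proof
  fix t
  assume "t \<in> inner_products C"
  then obtain x y where xy: "x \<in> C" "y \<in> C - {x}" "t = x \<bullet> y"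
    by (auto simp: inner_products_def)
  have "(\<Sum>y\<in>C - {x}. poly p (x \<bullet> y)) = 0"
    using spherical_design_sum_poly_inner_others[OF reindex design xy(1) \<open>degree p \<le> \<tau>\<close>] eq
    by simp
  moreover have "finite C"
    using design by (simp add: spherical_design_def)
  ultimately show "poly p t = 0"
    using nonneg xy by (subst (asm) sum_nonneg_eq_0_iff) (auto simp: inner_products_def)
qed

definition lagrange_basis :: "real set \<Rightarrow> real \<Rightarrow> real poly" where
  "lagrange_basis R t = (\<Prod>s\<in>R - {t}. [:- s / (t - s), 1 / (t - s):])"

lemma poly_lagrange_basis:
  assumes "finite R" "s \<in> R"
  shows "poly (lagrange_basis R t) s = (if s = t then 1 else 0)"
proof -
  have "poly (lagrange_basis R t) s = (\<Prod>r\<in>R - {t}. (s - r) / (t - r))"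
    by (simp add: lagrange_basis_def poly_prod diff_divide_distrib)
  then show ?thesis
    using assms by auto
qed

lemma degree_lagrange_basis: "finite R \<Longrightarrow> degree (lagrange_basis R t) \<le> card (R - {t})"
  unfolding lagrange_basis_def
  by (rule order_trans[OF degree_prod_sum_le]) (auto intro: sum_bounded_above[where K = 1, simplified])

lemma spherical_design_dist_count:
  fixes C :: "(real^'n::finite) set"
  assumes reindex: "CARD('m::{finite,wellorder}) = CARD('n)"
    and design: "spherical_design \<tau> C" and x: "x \<in> C"
    and R: "finite R" "inner_products C \<subseteq> R" "card (R - {t}) \<le> \<tau>" and "t \<noteq> 1"
  shows "dist_count C t x
    = card C * sphere_poly_mean CARD('n) (lagrange_basis R t) - poly (lagrange_basis R t) 1"
proof -
  have "degree (lagrange_basis R t) \<le> \<tau>"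
    using degree_lagrange_basis[OF R(1)] R(3) by (rule order_trans)
  note others = spherical_design_sum_poly_inner_others[OF reindex design x this]
  have "x \<bullet> y \<in> R" if "y \<in> C - {x}" for y
    using R(2) x that by (auto simp: inner_products_def)
  then have "(\<Sum>y\<in>C - {x}. poly (lagrange_basis R t) (x \<bullet> y))
      = (\<Sum>y\<in>C - {x}. if x \<bullet> y = t then 1 else 0)"
    using R(1) by (intro sum.cong) (auto simp: poly_lagrange_basis)
  also have "\<dots> = card {y \<in> C - {x}. x \<bullet> y = t}"
    using design by (simp add: spherical_design_def flip: sum.inter_filter)
  also have "{y \<in> C - {x}. x \<bullet> y = t} = {y \<in> C. x \<bullet> y = t}"
    using spherical_design_unit(2)[OF design x] \<open>t \<noteq> 1\<close> by auto
  finally show ?thesis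
    using others by (simp add: dist_count_def)
qed

section \<open>Designs in dimension 48\<close>

definition extremal_inner_products :: "real set" where
  "extremal_inner_products = {-1, 1/2, -1/2, 1/3, -1/3, 1/6, -1/6, 0}"

definition extremal_poly :: "real poly" where
  "extremal_poly = [:1, 1:] * [:-1/4, 0, 1:] * [:-1/9, 0, 1:] * [:-1/36, 0, 1:] ^ 2 * [:0, 0, 1:]"

definition extremal_distance_distribution :: "real \<Rightarrow> nat" where
  "extremal_distance_distribution t =
     (if t = -1 then 1
      else if t = 1/2 \<or> t = -1/2 then 36848
      else if t = 1/3 \<or> t = -1/3 then 1678887
      else if t = 1/6 \<or> t = -1/6 then 12608784
      else if t = 0 then 23766960
      else 0)"

lemma poly_extremal_poly:
  "poly extremal_poly t = (t + 1) * (t\<^sup>2 - 1/4) * (t\<^sup>2 - 1/9) * (t\<^sup>2 - 1/36)\<^sup>2 * t\<^sup>2"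
  by (simp add: extremal_poly_def power2_eq_square field_simps)

lemma degree_extremal_poly: "degree extremal_poly = 11"
  by (simp add: extremal_poly_def eval_nat_numeral)

lemma extremal_poly_values:
  "sphere_poly_mean 48 extremal_poly = 7 / 291133440"
  "poly extremal_poly 1 = 52416000 * (7 / 291133440)"
  by (simp_all add: extremal_poly_def sphere_poly_mean_def eval_nat_numeral)

lemma extremal_poly_nonneg:
  assumes "-1 \<le> t" "t \<notin> {-1/2<..<-1/3} \<union> {1/3<..<1/2}"
  shows "0 \<le> poly extremal_poly t"
proof -
  have "\<bar>t\<bar> \<le> 1/3 \<or> 1/2 \<le> \<bar>t\<bar>"
    using assms(2) by auto
  then have "t\<^sup>2 \<le> 1/9 \<or> 1/4 \<le> t\<^sup>2"
    using power_mono[of "\<bar>t\<bar>" "1/3" 2] power_mono[of "1/2" "\<bar>t\<bar>" 2] by (auto simp: power_divide)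
  then have "0 \<le> (t\<^sup>2 - 1/4) * (t\<^sup>2 - 1/9)"
    by (auto intro: mult_nonpos_nonpos)
  moreover have "poly extremal_poly t = (t + 1) * ((t\<^sup>2 - 1/4) * (t\<^sup>2 - 1/9)) * ((t\<^sup>2 - 1/36)\<^sup>2 * t\<^sup>2)"
    by (simp add: poly_extremal_poly mult_ac)
  ultimately show ?thesis
    using assms(1) by simp
qed

lemma extremal_poly_root:
  assumes "poly extremal_poly t = 0"
  shows "t \<in> extremal_inner_products"
proof -
  have "t + 1 = 0 \<or> t\<^sup>2 = (1/2)\<^sup>2 \<or> t\<^sup>2 = (1/3)\<^sup>2 \<or> t\<^sup>2 = (1/6)\<^sup>2 \<or> t = 0"
    using assms by (simp add: poly_extremal_poly power_divide)
  then show ?thesis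
    unfolding extremal_inner_products_def power2_eq_iff by auto
qed

lemma extremal_distance_distribution_lagrange:
  assumes "t \<in> extremal_inner_products"
  shows "52416000 * sphere_poly_mean 48 (lagrange_basis extremal_inner_products t)
    - poly (lagrange_basis extremal_inner_products t) 1 = extremal_distance_distribution t"
    (is "?N t = _")
proof -
  have counts:
    "?N (-1) = 1"
    "?N (1/2) = 36848"
    "?N (-1/2) = 36848"
    "?N (1/3) = 1678887"
    "?N (-1/3) = 1678887"
    "?N (1/6) = 12608784"
    "?N (-1/6) = 12608784"
    "?N 0 = 23766960"
    by (simp_all add: extremal_inner_products_def sphere_poly_mean_def lagrange_basis_def
        eval_nat_numeral insert_Diff_if)
  from assms[unfolded extremal_inner_products_def] show ?thesis
    by (elim insertE emptyE; hypsubst; simp only: counts; simp add: extremal_distance_distribution_def)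
qed

lemma extremal_design_dist_count:
  fixes C :: "(real^'n::finite) set"
  assumes dim: "CARD('n) = 48" and design: "spherical_design 11 C"
    and inner: "inner_products C \<subseteq> extremal_inner_products" and card: "card C = 52416000"
    and x: "x \<in> C" and t: "t \<noteq> 1"
  shows "dist_count C t x = extremal_distance_distribution t"
proof (cases "t \<in> extremal_inner_products")
  case True
  have reindex: "CARD(48) = CARD('n)"
    using dim by simp
  have R: "finite extremal_inner_products" "card (extremal_inner_products - {t}) \<le> 11"
    using card_Diff1_le[of extremal_inner_products t] by (simp_all add: extremal_inner_products_def)
  have "real (dist_count C t x)
      = 52416000 * sphere_poly_mean 48 (lagrange_basis extremal_inner_products t)
        - poly (lagrange_basis extremal_inner_products t) 1"
    using spherical_design_dist_count[OF reindex design x R(1) inner R(2)] t card dim by simp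
  also have "\<dots> = extremal_distance_distribution t"
    by (rule extremal_distance_distribution_lagrange[OF True])
  finally show ?thesis
    by simp
next
  case False
  have "x \<bullet> y \<noteq> t" if "y \<in> C" for y
  proof
    assume "x \<bullet> y = t"
    moreover have "y \<noteq> x"
      using \<open>x \<bullet> y = t\<close> t spherical_design_unit(2)[OF design x] by auto
    ultimately have "t \<in> inner_products C"
      using x that unfolding inner_products_def by blast
    with False inner show False
      by blast
  qed
  then have "dist_count C t x = 0"
    unfolding dist_count_def by (metis (mono_tags, lifting) card.empty empty_Collect_eq)
  moreover have "extremal_distance_distribution t = 0"
    using False by (auto simp: extremal_inner_products_def extremal_distance_distribution_def)
  ultimately show ?thesis
    by simp
qed

theorem theorem7:
  fixes C :: "(real^'n::finite) set"
  assumes "CARD('n) = 48"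
    and "spherical_design 11 C"
    and "inner_products C \<subseteq> {-1..<1} - ({-1/2<..<-1/3} \<union> {1/3<..<1/2})"
  shows "card C \<ge> 52416000 \<and>
    (card C = 52416000 \<longrightarrow>
      distance_invariant C \<and>
      (\<forall>x\<in>C. \<forall>t\<in>{-1..<1}. dist_count C t x =
          (if t = -1 then 1
           else if t = 1/2 \<or> t = -1/2 then 36848
           else if t = 1/3 \<or> t = -1/3 then 1678887
           else if t = 1/6 \<or> t = -1/6 then 12608784
           else if t = 0 then 23766960
           else 0)))"
proof -
  have reindex: "CARD(48) = CARD('n)"
    using assms(1) by simp
  have degree: "degree extremal_poly \<le> 11"
    by (simp add: degree_extremal_poly)
  have nonneg: "\<forall>t\<in>inner_products C. 0 \<le> poly extremal_poly t"
    using assms(3) by (auto intro!: extremal_poly_nonneg)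
  have "poly extremal_poly 1 \<le> card C * sphere_poly_mean 48 extremal_poly"
    using spherical_design_poly_bound[OF reindex assms(2) degree nonneg] assms(1) by simp
  then have "52416000 \<le> card C"
    by (simp add: extremal_poly_values)
  moreover have "distance_invariant C \<and>
      (\<forall>x\<in>C. \<forall>t\<in>{-1..<1}. dist_count C t x = extremal_distance_distribution t)"
    if card: "card C = 52416000"
  proof -
    have "\<forall>t\<in>inner_products C. poly extremal_poly t = 0"
      using spherical_design_poly_bound_eq[OF reindex assms(2) degree nonneg] card assms(1)
      by (simp add: extremal_poly_values)
    then have "inner_products C \<subseteq> extremal_inner_products"
      using extremal_poly_root by blast
    then show ?thesis
      using extremal_design_dist_count[OF assms(1,2) _ card]
      by (simp add: distance_invariant_def)
  qed
  ultimately show ?thesis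
    by (simp add: extremal_distance_distribution_def)
qed

end
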